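(* Let $b\in\mathbb{R}$, $\lambda>0$, $E=\{x_2>0\}$, and let $S_b(-\lambda)$ be the integral operator on $L^2(E)$ with kernel $\mathrm{e}^{\mathrm{i} b\phi(\mathbf{x},\mathbf{y})}\frac1{2\pi}\big(K_0(\sqrt\lambda|\mathbf{x}-\mathbf{y}|)-K_0(\sqrt\lambda|\mathbf{x}-\mathbf{y}^*|)\big)$. Then $S_b(-\lambda)$ maps $C_c^\infty(E)$ into $\mathcal{M}$.
   Context: $\phi(\mathbf{x},\mathbf{y})=\tfrac12(y_1-x_1)(x_2+y_2)$, $\mathbf{y}^*=(y_1,-y_2)$, $K_0$ the Macdonald function (modified Bessel function of the second kind of order $0$). $C^\infty(\bar E)$ is the set of smooth functions on $E$ all of whose partial derivatives extend continuously to $\bar E$. $\mathcal{M}$ is the set of all $f\in C^\infty(\bar E)$ such that $f(x_1,0)=0$ for all $x_1\in\mathbb{R}$ and for which there is $c>0$ such that for every $\alpha\in\mathbb{N}_0^2$ there is $C>0$ with $|\partial^\alpha f(\mathbf{x})|\le C\mathrm{e}^{-c|\mathbf{x}|}$ for all $\mathbf{x}\in\bar E$. *)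

theory Defs
  imports "HOL-Analysis.Analysis"
begin

definition upper_half :: "(real \<times> real) set" where
  "upper_half = {x. snd x > 0}"

definition MacdonaldK0 :: "real \<Rightarrow> real" where
  "MacdonaldK0 r = (LBINT t:{0..}. exp (- r * cosh t))"

definition phase :: "real \<times> real \<Rightarrow> real \<times> real \<Rightarrow> real" where
  "phase x y = (1/2) * (fst y - fst x) * (snd x + snd y)"

definition reflect_pt :: "real \<times> real \<Rightarrow> real \<times> real" where
  "reflect_pt y = (fst y, - snd y)"

definition Sb_kernel :: "real \<Rightarrow> real \<Rightarrow> real \<times> real \<Rightarrow> real \<times> real \<Rightarrow> complex" where
  "Sb_kernel b lam x y =
     cis (b * phase x y) *
     complex_of_real ((1 / (2 * pi)) *
        (MacdonaldK0 (sqrt lam * norm (x - y)) - MacdonaldK0 (sqrt lam * norm (x - reflect_pt y))))"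

definition Sb_op :: "real \<Rightarrow> real \<Rightarrow> (real \<times> real \<Rightarrow> complex) \<Rightarrow> real \<times> real \<Rightarrow> complex" where
  "Sb_op b lam f x = (LINT y:upper_half|lborel. Sb_kernel b lam x y * f y)"

definition pd :: "nat \<Rightarrow> (real \<times> real \<Rightarrow> complex) \<Rightarrow> real \<times> real \<Rightarrow> complex" where
  "pd i f x = (if i = 1 then vector_derivative (\<lambda>t. f (t, snd x)) (at (fst x))
               else vector_derivative (\<lambda>t. f (fst x, t)) (at (snd x)))"

definition pd_differentiable :: "nat \<Rightarrow> (real \<times> real \<Rightarrow> complex) \<Rightarrow> real \<times> real \<Rightarrow> bool" where
  "pd_differentiable i f x = (if i = 1 then (\<lambda>t. f (t, snd x)) differentiable (at (fst x))
               else (\<lambda>t. f (fst x, t)) differentiable (at (snd x)))"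

fun pdl :: "nat list \<Rightarrow> (real \<times> real \<Rightarrow> complex) \<Rightarrow> real \<times> real \<Rightarrow> complex" where
  "pdl [] f = f"
| "pdl (i # is) f = pd i (pdl is f)"

definition pdm :: "nat \<times> nat \<Rightarrow> (real \<times> real \<Rightarrow> complex) \<Rightarrow> real \<times> real \<Rightarrow> complex" where
  "pdm \<alpha> f = pdl (replicate (fst \<alpha>) 1 @ replicate (snd \<alpha>) 2) f"

definition smooth_on :: "(real \<times> real) set \<Rightarrow> (real \<times> real \<Rightarrow> complex) \<Rightarrow> bool" where
  "smooth_on S f \<longleftrightarrow>
     (\<forall>is. set is \<subseteq> {1,2} \<longrightarrow>
        continuous_on S (pdl is f) \<and>
        (\<forall>i\<in>{1,2}. \<forall>x\<in>S. pd_differentiable i (pdl is f) x))"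

definition cont_ext :: "(real \<times> real) set \<Rightarrow> (real \<times> real \<Rightarrow> complex) \<Rightarrow> (real \<times> real \<Rightarrow> complex) \<Rightarrow> bool" where
  "cont_ext S h g \<longleftrightarrow> continuous_on (closure S) g \<and> (\<forall>x\<in>S. g x = h x)"

definition smooth_closure :: "(real \<times> real) set \<Rightarrow> (real \<times> real \<Rightarrow> complex) \<Rightarrow> bool" where
  "smooth_closure S f \<longleftrightarrow> smooth_on S f \<and>
     (\<forall>is. set is \<subseteq> {1,2} \<longrightarrow> (\<exists>g. cont_ext S (pdl is f) g))"

definition Cc_infty :: "(real \<times> real) set \<Rightarrow> (real \<times> real \<Rightarrow> complex) set" where
  "Cc_infty S = {f. smooth_on S f \<and> (\<exists>K. compact K \<and> K \<subseteq> S \<and> (\<forall>x. x \<notin> K \<longrightarrow> f x = 0))}"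

text \<open>The class M; values on the boundary are those of the continuous extensions.\<close>
definition classM :: "(real \<times> real \<Rightarrow> complex) set" where
  "classM = {f. smooth_closure upper_half f \<and>
     (\<forall>g. cont_ext upper_half f g \<longrightarrow> (\<forall>x1. g (x1, 0) = 0)) \<and>
     (\<exists>c>0. \<forall>\<alpha>::nat \<times> nat. \<exists>C. \<forall>g. cont_ext upper_half (pdm \<alpha> f) g \<longrightarrow>
         (\<forall>x\<in>closure upper_half. norm (g x) \<le> C * exp (- c * norm x)))}"

end

theory Submission
  imports Defs
begin

(*
  Substituting z = x - y in the direct and z = x* - y in the reflected part of the kernel
  (note |x - y*| = |x* - y|) writes S_b(-lam) f (x) as the integral of the free kernel
  G(z) = K_0(sqrt lam |z|) / (2 pi) against an amplitude H(x, z) built from f(x - z),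
  f(x* - z) and the phases exp(i b (z1 z2 / 2 - z1 x2)) and exp(i b z1 z2 / 2).
  Differentiating in x only hits f and the first phase, which brings down polynomial factors
  in z1, so every derivative of S_b(-lam) f is again an integral of G against an amplitude of
  the same kind. Each amplitude is bounded by C exp(g |z|) with g = sqrt lam / 8 and vanishes
  for |z| < |x| - R when f is supported in the ball of radius R. Since K_0(r) <= 2 exp(-r/2) / r,
  the weight G(z) exp(2 g |z|) is integrable; this justifies differentiation under the integral
  sign and yields the bound C exp(-g |x|). On the boundary x2 = 0 the two kernel terms cancel.
*)

section \<open>Parameter integrals\<close>

lemma lborel_distr_minus_left:
  "distr lborel borel (\<lambda>z::'a::euclidean_space. w - z) = lborel"
proof -
  have "lborel = density (distr lborel borel (\<lambda>z::'a. w + (-1) *\<^sub>R z)) (\<lambda>_. \<bar>-1::real\<bar> ^ DIM('a))"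
    by (rule lborel_affine) simp
  then show ?thesis by (simp add: density_1)
qed

lemma
  fixes g :: "'a::euclidean_space \<Rightarrow> 'b::{banach, second_countable_topology}"
  assumes "g \<in> borel_measurable borel"
  shows integrable_lborel_minus_left: "integrable lborel (\<lambda>z. g (w - z)) \<longleftrightarrow> integrable lborel g"
    and integral_lborel_minus_left: "(\<integral>z. g (w - z) \<partial>lborel) = integral\<^sup>L lborel g"
proof -
  have T: "(\<lambda>z::'a. w - z) \<in> measurable lborel borel" by simp
  show "integrable lborel (\<lambda>z. g (w - z)) \<longleftrightarrow> integrable lborel g"
    using integrable_distr_eq[OF T assms] by (simp add: lborel_distr_minus_left)
  show "(\<integral>z. g (w - z) \<partial>lborel) = integral\<^sup>L lborel g"
    using integral_distr[OF T assms] by (simp add: lborel_distr_minus_left)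
qed

lemma isCont_integral_dominated:
  fixes h :: "'p::metric_space \<Rightarrow> 'a \<Rightarrow> 'b::{banach, second_countable_topology}"
  assumes cont: "\<And>z. isCont (\<lambda>x. h x z) x0"
    and meas: "\<And>x. h x \<in> borel_measurable M"
    and bound: "\<And>x z. norm (h x z) \<le> g z" and g: "integrable M g"
  shows "isCont (\<lambda>x. \<integral>z. h x z \<partial>M) x0"
  unfolding continuous_at_sequentially comp_def
proof (intro allI impI)
  fix X assume X: "X \<longlonglongrightarrow> x0"
  show "(\<lambda>n. \<integral>z. h (X n) z \<partial>M) \<longlonglongrightarrow> (\<integral>z. h x0 z \<partial>M)"
    by (rule integral_dominated_convergence[OF meas meas g])
       (use bound isCont_tendsto_compose[OF cont X] in auto)
qed

lemma norm_linearization_error_le: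
  fixes g :: "real \<Rightarrow> 'a::real_normed_vector"
  assumes deriv: "\<And>t. (g has_vector_derivative g' t) (at t)" and bound: "\<And>t. norm (g' t) \<le> B"
  shows "norm (g s - g t - (s - t) *\<^sub>R g' t) \<le> 2 * B * \<bar>s - t\<bar>"
proof -
  have B: "0 \<le> B" using bound[of 0] norm_ge_zero order_trans by blast
  have "norm (g s - g t) \<le> B * norm (s - t)"
  proof (rule differentiable_bound[of UNIV g "\<lambda>t u. u *\<^sub>R g' t" B])
    show "(g has_derivative (\<lambda>u. u *\<^sub>R g' x)) (at x within UNIV)" for x
      using deriv[of x] by (simp add: has_vector_derivative_def)
    show "onorm (\<lambda>u. u *\<^sub>R g' x) \<le> B" for x
      by (rule onorm_bound[OF B])
         (use bound[of x] in \<open>metis abs_ge_zero mult.commute mult_left_mono norm_scaleR real_norm_def\<close>)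
  qed auto
  moreover have "norm ((s - t) *\<^sub>R g' t) \<le> B * norm (s - t)"
    using mult_right_mono[OF bound[of t], of "\<bar>s - t\<bar>"] by (simp add: mult.commute)
  ultimately have "norm (g s - g t) + norm ((s - t) *\<^sub>R g' t) \<le> B * norm (s - t) + B * norm (s - t)"
    by (rule add_mono)
  with norm_triangle_ineq4[of "g s - g t" "(s - t) *\<^sub>R g' t"] show ?thesis by simp
qed

lemma has_vector_derivative_integral_dominated:
  fixes h h' :: "real \<Rightarrow> 'a \<Rightarrow> 'b::{banach, second_countable_topology}"
  assumes deriv: "\<And>t z. ((\<lambda>s. h s z) has_vector_derivative h' t z) (at t)"
    and meas: "\<And>t. h t \<in> borel_measurable M" "\<And>t. h' t \<in> borel_measurable M"
    and integrable: "\<And>t. integrable M (h t)"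
    and bound: "\<And>t z. norm (h' t z) \<le> g z" and g: "integrable M g"
  shows "((\<lambda>t. \<integral>z. h t z \<partial>M) has_vector_derivative (\<integral>z. h' t0 z \<partial>M)) (at t0)"
proof -
  define T where "T t = (\<integral>z. h t z \<partial>M)" for t
  define D where "D = (\<integral>z. h' t0 z \<partial>M)"
  have integrable': "integrable M (h' t)" for t
    by (rule Bochner_Integration.integrable_bound[OF g meas(2)])
       (use bound in \<open>auto intro: order_trans[OF _ abs_ge_self]\<close>)
  have "((\<lambda>t. norm (T t - T t0 - (t - t0) *\<^sub>R D) / norm (t - t0)) \<longlongrightarrow> 0) (at t0)"
    unfolding tendsto_at_iff_sequentially comp_def
  proof (intro allI impI)
    fix X :: "nat \<Rightarrow> real" assume X: "\<forall>i. X i \<in> UNIV - {t0}" and X_lim: "X \<longlonglongrightarrow> t0"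
    define q where "q i z = norm (h (X i) z - h t0 z - (X i - t0) *\<^sub>R h' t0 z) / norm (X i - t0)" for i z
    have q_bound: "norm (T (X i) - T t0 - (X i - t0) *\<^sub>R D) / norm (X i - t0) \<le> (\<integral>z. q i z \<partial>M)" for i
    proof -
      have "T (X i) - T t0 - (X i - t0) *\<^sub>R D = (\<integral>z. h (X i) z - h t0 z - (X i - t0) *\<^sub>R h' t0 z \<partial>M)"
        using integrable integrable' by (simp add: T_def D_def)
      then show ?thesis
        unfolding q_def integral_divide_zero by (auto intro: divide_right_mono integral_norm_bound)
    qed
    have "(\<lambda>i. \<integral>z. q i z \<partial>M) \<longlonglongrightarrow> (\<integral>z. 0 \<partial>M)"
    proof (rule integral_dominated_convergence[where w="\<lambda>z. 2 * g z"])
      show "q i \<in> borel_measurable M" for i unfolding q_def using meas by measurable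
      show "AE z in M. (\<lambda>i. q i z) \<longlonglongrightarrow> 0"
      proof (rule AE_I2)
        fix z
        have "((\<lambda>s. norm (h s z - h t0 z - (s - t0) *\<^sub>R h' t0 z) / norm (s - t0)) \<longlongrightarrow> 0) (at t0)"
          using deriv[where t=t0 and z=z] by (simp add: has_vector_derivative_def has_derivative_iff_norm)
        then show "(\<lambda>i. q i z) \<longlonglongrightarrow> 0"
          unfolding tendsto_at_iff_sequentially comp_def q_def using X X_lim by blast
      qed
      show "AE z in M. norm (q i z) \<le> 2 * g z" for i
        using norm_linearization_error_le[OF deriv bound, where s = "X i" and t = t0] X
        by (intro AE_I2) (simp add: q_def divide_le_eq mult_ac)
    qed (use g in auto)
    then have q_lim: "(\<lambda>i. \<integral>z. q i z \<partial>M) \<longlonglongrightarrow> 0" by simp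
    show "(\<lambda>i. norm (T (X i) - T t0 - (X i - t0) *\<^sub>R D) / norm (X i - t0)) \<longlonglongrightarrow> 0"
      by (rule tendsto_sandwich[OF _ _ tendsto_const q_lim])
         (use q_bound in \<open>auto intro!: always_eventually\<close>)
  qed
  then show ?thesis
    by (simp add: T_def D_def has_vector_derivative_def has_derivative_iff_norm bounded_linear_scaleR_left)
qed

section \<open>Gamma-type integrals and the Macdonald function\<close>

lemma nn_integral_powr_exp:
  assumes a: "a > 0" and p: "p > -1"
  shows "(\<integral>\<^sup>+t. ennreal (indicator {0..} t * t powr p * exp (- a * t)) \<partial>lborel)
    = ennreal (Gamma (p + 1) / a powr (p + 1))"
proof -
  define h where "h t = ennreal (indicator {0..} t * t powr p * exp (- a * t))" for t :: real
  have [measurable]: "h \<in> borel_measurable borel" unfolding h_def by measurable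
  have h_scaled: "h (t / a) = ennreal (a powr (-p)) * ennreal (indicator {0..} t * t powr ((p + 1) - 1) / exp t)" for t
  proof (cases "t \<ge> 0")
    case True
    have "(t / a) powr p = t powr p / a powr p" using True a by (simp add: powr_divide)
    then show ?thesis using True a
      by (simp add: h_def ennreal_mult''[symmetric] powr_minus field_simps exp_minus indicator_def)
  qed (use a in \<open>simp add: h_def indicator_def zero_le_mult_iff zero_le_divide_iff\<close>)
  have "(\<integral>\<^sup>+t. h t \<partial>lborel) = ennreal (1/a) * (\<integral>\<^sup>+t. h (0 + (1/a) * t) \<partial>lborel)"
    using a nn_integral_real_affine[of h "1/a" 0] by simp
  also have "\<dots> = ennreal (1/a) * (ennreal (a powr (-p)) * Gamma (p + 1))"
    using p by (simp add: h_scaled nn_integral_cmult Gamma_conv_nn_integral_real)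
  also have "\<dots> = ennreal (Gamma (p + 1) / a powr (p + 1))"
    using a p Gamma_real_pos[of "p + 1"]
    by (simp add: ennreal_mult''[symmetric] powr_add powr_minus field_simps)
  finally show ?thesis by (simp add: h_def)
qed

lemma nn_integral_abs_powr_exp:
  assumes a: "a > 0" and p: "p > -1"
  shows "(\<integral>\<^sup>+t. ennreal (\<bar>t\<bar> powr p * exp (- a * \<bar>t\<bar>)) \<partial>lborel)
    = ennreal (2 * Gamma (p + 1) / a powr (p + 1))"
proof -
  define v where "v t = ennreal (indicator {0..} t * t powr p * exp (- a * t))" for t :: real
  have [measurable]: "v \<in> borel_measurable borel" unfolding v_def by measurable
  have split: "ennreal (\<bar>t\<bar> powr p * exp (- a * \<bar>t\<bar>)) = v t + v (- t)" for t
    by (cases t "0::real" rule: linorder_cases) (auto simp: v_def)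
  have "(\<integral>\<^sup>+t. v (- t) \<partial>lborel) = (\<integral>\<^sup>+t. v t \<partial>lborel)"
    using nn_integral_real_affine[of v "-1" 0] by simp
  then have "(\<integral>\<^sup>+t. ennreal (\<bar>t\<bar> powr p * exp (- a * \<bar>t\<bar>)) \<partial>lborel) = 2 * (\<integral>\<^sup>+t. v t \<partial>lborel)"
    unfolding split by (subst nn_integral_add) (auto simp: mult_2)
  also have "\<dots> = 2 * ennreal (Gamma (p + 1) / a powr (p + 1))"
    using nn_integral_powr_exp[OF a p] by (simp add: v_def)
  also have "\<dots> = ennreal (2 * Gamma (p + 1) / a powr (p + 1))"
    using ennreal_mult'[of 2 "Gamma (p + 1) / a powr (p + 1)"] by simp
  finally show ?thesis .
qed

lemma borel_measurable_cosh [measurable]: "(cosh :: real \<Rightarrow> real) \<in> borel_measurable borel"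
  by (intro borel_measurable_continuous_onI continuous_intros)

lemma borel_measurable_MacdonaldK0 [measurable]: "MacdonaldK0 \<in> borel_measurable borel"
  unfolding MacdonaldK0_def[abs_def] set_lebesgue_integral_def by measurable

lemma MacdonaldK0_nonneg: "0 \<le> MacdonaldK0 r"
  unfolding MacdonaldK0_def set_lebesgue_integral_def
  by (rule integral_nonneg_AE) (auto simp: indicator_def)

lemma MacdonaldK0_le:
  assumes r: "r > 0"
  shows "MacdonaldK0 r \<le> 2 * exp (- r / 2) / r"
proof -
  have cosh_ge: "(1 + t) / 2 \<le> cosh t" for t :: real
  proof -
    have "1 + t \<le> exp t + exp (- t)"
      using exp_ge_add_one_self[of t] exp_gt_zero[of "- t"] by linarith
    then have "(1 + t) / 2 \<le> (exp t + exp (- t)) / 2"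
      by (rule divide_right_mono) simp
    then show ?thesis by (simp add: cosh_def)
  qed
  have pointwise: "ennreal (indicator {0..} t * exp (- r * cosh t))
      \<le> ennreal (exp (- r / 2)) * ennreal (indicator {0..} t * t powr 0 * exp (- (r / 2) * t))"
    if "t \<noteq> 0" for t :: real
  proof (cases "t > 0")
    case True
    have "- r * cosh t \<le> - r / 2 + - (r / 2) * t"
      using mult_left_mono[OF cosh_ge[of t], of r] r by (simp add: field_simps)
    then have "exp (- r * cosh t) \<le> exp (- r / 2) * exp (- (r / 2) * t)"
      by (simp add: exp_add[symmetric])
    then show ?thesis using True by (simp add: ennreal_mult'[symmetric])
  qed (use that in \<open>simp add: indicator_def\<close>)
  have "(\<integral>\<^sup>+t. ennreal (indicator {0..} t * exp (- r * cosh t)) \<partial>lborel)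
      \<le> (\<integral>\<^sup>+t. ennreal (exp (- r / 2)) * ennreal (indicator {0..} t * t powr 0 * exp (- (r / 2) * t)) \<partial>lborel)"
    by (rule nn_integral_mono_AE) (use AE_lborel_singleton[of 0] pointwise in \<open>auto elim: AE_mp\<close>)
  also have "\<dots> = ennreal (exp (- r / 2)) * ennreal (1 / (r / 2))"
    using nn_integral_powr_exp[of "r / 2" 0] r by (simp add: nn_integral_cmult)
  also have "\<dots> = ennreal (2 * exp (- r / 2) / r)"
    using r by (simp add: ennreal_mult[symmetric])
  finally show ?thesis
    unfolding MacdonaldK0_def set_lebesgue_integral_def
    using r by (subst integral_eq_nn_integral) (auto intro!: enn2real_leI)
qed

lemma AE_lborel_coordinates_nonzero: "AE z in lborel. fst z \<noteq> (0::real) \<and> snd z \<noteq> (0::real)"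
proof -
  have "AE z in lborel \<Otimes>\<^sub>M lborel. fst z \<noteq> (0::real) \<and> snd z \<noteq> (0::real)"
  proof (rule lborel_pair.AE_pair_measure)
    show "AE x in lborel. AE y in lborel. fst (x, y) \<noteq> (0::real) \<and> snd (x, y) \<noteq> (0::real)"
      using AE_lborel_singleton[of 0] by (auto elim!: AE_mp)
  qed measurable
  then show ?thesis by (simp only: lborel_prod)
qed

lemma nn_integral_lborel_pair_product:
  fixes u :: "real \<Rightarrow> real"
  assumes [measurable]: "u \<in> borel_measurable borel" and u_nonneg: "\<And>t. 0 \<le> u t"
  shows "(\<integral>\<^sup>+z. ennreal (u (fst z)) * ennreal (u (snd z)) \<partial>(lborel :: (real \<times> real) measure))
     = (\<integral>\<^sup>+t. ennreal (u t) \<partial>lborel) * (\<integral>\<^sup>+t. ennreal (u t) \<partial>lborel)"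
proof -
  have prod_Basis: "(\<Prod>b\<in>Basis. f (z \<bullet> b)) = f (fst z) * f (snd z)"
    for f :: "real \<Rightarrow> ennreal" and z :: "real \<times> real"
    by (simp add: Basis_prod_def inner_prod_def prod.union_disjoint mult.commute)
  have "(\<integral>\<^sup>+z. (\<Prod>b\<in>(Basis :: (real \<times> real) set). ennreal (u (z \<bullet> b))) \<partial>lborel)
     = (\<Prod>b\<in>(Basis :: (real \<times> real) set). \<integral>\<^sup>+t. ennreal (u t) \<partial>lborel)"
    by (subst nn_integral_lborel_prod) (auto simp: u_nonneg)
  then show ?thesis
    using prod_Basis[of "\<lambda>t. ennreal (u t)"] prod_Basis[of "\<lambda>_. \<integral>\<^sup>+t. ennreal (u t) \<partial>lborel"] by simp
qed

lemma MacdonaldK0_exp_le_product: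
  assumes c: "c > 0" and z: "fst z \<noteq> 0" "snd z \<noteq> 0"
  shows "MacdonaldK0 (c * norm z) * exp (c / 4 * norm z)
    \<le> 2 / c * ((\<bar>fst z\<bar> powr (-1/2) * exp (- (c / 8) * \<bar>fst z\<bar>))
      * (\<bar>snd z\<bar> powr (-1/2) * exp (- (c / 8) * \<bar>snd z\<bar>)))"
proof -
  define n where "n = norm z"
  have fst_le: "\<bar>fst z\<bar> \<le> n" and snd_le: "\<bar>snd z\<bar> \<le> n"
    using norm_fst_le[of "fst z" "snd z"] norm_snd_le[of "snd z" "fst z"] by (simp_all add: n_def)
  then have n: "n > 0" using z by auto
  have "MacdonaldK0 (c * n) * exp (c / 4 * n) \<le> 2 * exp (- (c * n) / 2) / (c * n) * exp (c / 4 * n)"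
    using MacdonaldK0_le[of "c * n"] c n by (intro mult_right_mono) auto
  also have "\<dots> = 2 / c * (1 / n * exp (- (c / 4) * n))"
    using c n by (simp add: field_simps exp_add[symmetric])
  also have "\<dots> \<le> 2 / c * ((\<bar>fst z\<bar> powr (-1/2) * \<bar>snd z\<bar> powr (-1/2))
      * (exp (- (c / 8) * \<bar>fst z\<bar>) * exp (- (c / 8) * \<bar>snd z\<bar>)))"
  proof (intro mult_left_mono mult_mono)
    have "\<bar>fst z\<bar> * \<bar>snd z\<bar> \<le> n * n"
      using fst_le snd_le by (intro mult_mono) auto
    then have "sqrt \<bar>fst z\<bar> * sqrt \<bar>snd z\<bar> \<le> n"
      using n real_sqrt_le_mono by (fastforce simp: real_sqrt_mult[symmetric])
    then show "1 / n \<le> \<bar>fst z\<bar> powr (-1/2) * \<bar>snd z\<bar> powr (-1/2)"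
      using z n by (simp add: powr_minus powr_half_sqrt divide_simps)
    show "exp (- (c / 4) * n) \<le> exp (- (c / 8) * \<bar>fst z\<bar>) * exp (- (c / 8) * \<bar>snd z\<bar>)"
      using mult_left_mono[OF add_mono[OF fst_le snd_le], of c] c
      by (simp add: exp_add[symmetric] field_simps)
  qed (use c in auto)
  finally show ?thesis by (simp add: n_def ac_simps)
qed

lemma integrable_MacdonaldK0_exp:
  assumes c: "c > 0"
  shows "integrable lborel (\<lambda>z::real \<times> real. MacdonaldK0 (c * norm z) * exp (c / 4 * norm z))"
proof -
  define u where "u t = \<bar>t\<bar> powr (-1/2) * exp (- (c / 8) * \<bar>t\<bar>)" for t :: real
  have [measurable]: "u \<in> borel_measurable borel" unfolding u_def by measurable
  have u_nonneg: "0 \<le> u t" for t unfolding u_def by simp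
  define W where "W z = 2 / c * (u (fst z) * u (snd z))" for z :: "real \<times> real"
  have "integrable lborel W"
  proof (rule integrableI_nonneg)
    have "W \<in> borel_measurable (borel \<Otimes>\<^sub>M borel)" unfolding W_def by measurable
    then show "W \<in> borel_measurable lborel" by (simp add: borel_prod)
    show "AE z in lborel. 0 \<le> W z" using c u_nonneg by (simp add: W_def)
    have "(\<lambda>z::real \<times> real. ennreal (u (fst z)) * ennreal (u (snd z))) \<in> borel_measurable borel"
      by (subst borel_prod[symmetric]) measurable
    moreover have "ennreal (W z) = ennreal (2 / c) * (ennreal (u (fst z)) * ennreal (u (snd z)))" for z
      using c u_nonneg by (simp add: W_def ennreal_mult[symmetric])
    ultimately have "(\<integral>\<^sup>+z. ennreal (W z) \<partial>lborel)
        = ennreal (2 / c) * ((\<integral>\<^sup>+t. ennreal (u t) \<partial>lborel) * (\<integral>\<^sup>+t. ennreal (u t) \<partial>lborel))"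
      by (simp add: nn_integral_cmult nn_integral_lborel_pair_product u_nonneg)
    also have "\<dots> < \<infinity>"
      using nn_integral_abs_powr_exp[of "c / 8" "-1/2"] c by (simp add: u_def ennreal_mult_less_top)
    finally show "(\<integral>\<^sup>+z. ennreal (W z) \<partial>lborel) < \<infinity>" .
  qed
  then show ?thesis
  proof (rule Bochner_Integration.integrable_bound)
    have "(\<lambda>z::real \<times> real. MacdonaldK0 (c * norm z) * exp (c / 4 * norm z)) \<in> borel_measurable borel"
      by measurable
    then show "(\<lambda>z::real \<times> real. MacdonaldK0 (c * norm z) * exp (c / 4 * norm z)) \<in> borel_measurable lborel"
      by simp
    show "AE z in lborel. norm (MacdonaldK0 (c * norm z) * exp (c / 4 * norm z)) \<le> norm (W z)"
      using AE_lborel_coordinates_nonzero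
    proof eventually_elim
      case (elim z)
      then have "MacdonaldK0 (c * norm z) * exp (c / 4 * norm z) \<le> W z"
        using MacdonaldK0_exp_le_product[OF c, of z] by (simp add: W_def u_def)
      moreover have "0 \<le> W z" using c u_nonneg by (simp add: W_def)
      ultimately show ?case using MacdonaldK0_nonneg[of "c * norm z"] by simp
    qed
  qed
qed

section \<open>The class M and smooth functions with compact support\<close>

lemma open_upper_half: "open upper_half"
  unfolding upper_half_def by (intro open_Collect_less continuous_intros)

lemma closure_upper_half: "closure upper_half = {x. snd x \<ge> 0}"
proof -
  have "upper_half = {x. (0::real, 1::real) \<bullet> x > 0}"
    by (auto simp: upper_half_def inner_prod_def)
  moreover have "closure {x. (0::real, 1::real) \<bullet> x > 0} = {x. (0::real, 1::real) \<bullet> x \<ge> 0}"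
    by (rule closure_halfspace_gt) (simp add: zero_prod_def)
  ultimately show ?thesis by (auto simp: inner_prod_def)
qed

lemma cont_ext_eq:
  assumes "cont_ext S h g" and "continuous_on UNIV h" and "x \<in> closure S"
  shows "g x = h x"
proof -
  have "continuous_on (closure S) (\<lambda>y. g y - h y)"
    using assms(1,2) by (auto simp: cont_ext_def intro: continuous_on_diff continuous_on_subset)
  then have "closed {y \<in> closure S. g y - h y = 0}"
    by (rule continuous_closed_preimage_constant) simp
  moreover have "S \<subseteq> {y \<in> closure S. g y - h y = 0}"
    using assms(1) closure_subset by (auto simp: cont_ext_def)
  ultimately have "closure S \<subseteq> {y \<in> closure S. g y - h y = 0}"
    by (rule closure_minimal[rotated])
  then show ?thesis using assms(3) by auto
qed

lemma classM_I:
  assumes c: "c > 0"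
    and cont: "\<And>is. set is \<subseteq> {1,2} \<Longrightarrow> continuous_on UNIV (pdl is T)"
    and diff: "\<And>is i x. set is \<subseteq> {1,2} \<Longrightarrow> i \<in> {1,2} \<Longrightarrow> pd_differentiable i (pdl is T) x"
    and boundary: "\<And>x1. T (x1, 0) = 0"
    and decay: "\<And>is. set is \<subseteq> {1,2} \<Longrightarrow> \<exists>C. \<forall>x. norm (pdl is T x) \<le> C * exp (- c * norm x)"
  shows "T \<in> classM"
proof -
  have "smooth_on upper_half T"
    unfolding smooth_on_def using cont diff by (blast intro: continuous_on_subset)
  moreover have "\<exists>g. cont_ext upper_half (pdl is T) g" if "set is \<subseteq> {1,2}" for "is"
    using cont[OF that] by (auto simp: cont_ext_def intro: continuous_on_subset)
  moreover have "g (x1, 0) = 0" if "cont_ext upper_half T g" for g x1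
  proof -
    have "continuous_on UNIV T" using cont[of "[]"] by simp
    with cont_ext_eq[OF that] boundary show ?thesis by (simp add: closure_upper_half)
  qed
  moreover have "\<exists>C. \<forall>g. cont_ext upper_half (pdm \<alpha> T) g \<longrightarrow>
      (\<forall>x\<in>closure upper_half. norm (g x) \<le> C * exp (- c * norm x))" for \<alpha>
  proof -
    define "is" where "is = replicate (fst \<alpha>) (1::nat) @ replicate (snd \<alpha>) 2"
    have "is": "set is \<subseteq> {1,2}" by (auto simp: is_def)
    obtain C where "\<And>x. norm (pdl is T x) \<le> C * exp (- c * norm x)" using decay[OF "is"] by blast
    then show ?thesis
      using cont_ext_eq[OF _ cont[OF "is"]] unfolding pdm_def is_def[symmetric] by metis
  qed
  ultimately show ?thesis
    unfolding classM_def smooth_closure_def using c by blast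
qed

lemma has_vector_derivative_lines_eq_0:
  fixes g :: "real \<times> real \<Rightarrow> 'a::real_normed_vector"
  assumes K: "closed K" and g: "\<And>y. y \<notin> K \<Longrightarrow> g y = 0" and y: "y \<notin> K"
  shows "((\<lambda>t. g (t, snd y)) has_vector_derivative 0) (at (fst y))"
    and "((\<lambda>t. g (fst y, t)) has_vector_derivative 0) (at (snd y))"
proof -
  have "open (- K)" using K by (simp add: open_Compl)
  moreover have "continuous_on UNIV (\<lambda>t::real. (t, snd y))" and "continuous_on UNIV (\<lambda>t::real. (fst y, t))"
    by (intro continuous_intros)+
  ultimately have line_1: "open ((\<lambda>t. (t, snd y)) -` (- K))" and line_2: "open ((\<lambda>t. (fst y, t)) -` (- K))"
    by (blast intro: open_vimage)+
  show "((\<lambda>t. g (t, snd y)) has_vector_derivative 0) (at (fst y))"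
    by (rule has_vector_derivative_transform_within_open[OF has_vector_derivative_const line_1])
       (use y g in auto)
  show "((\<lambda>t. g (fst y, t)) has_vector_derivative 0) (at (snd y))"
    by (rule has_vector_derivative_transform_within_open[OF has_vector_derivative_const line_2])
       (use y g in auto)
qed

lemma pdl_eq_0_outside:
  assumes K: "closed K" and f: "\<And>y. y \<notin> K \<Longrightarrow> f y = 0" and y: "y \<notin> K"
  shows "pdl is f y = 0"
  using y
proof (induction "is" arbitrary: y)
  case (Cons i "is")
  then show ?case
    using has_vector_derivative_lines_eq_0[where g = "pdl is f", OF K Cons.IH Cons.prems]
    by (simp add: pd_def vector_derivative_at)
qed (use f in simp)

locale smooth_compact_support =
  fixes F :: "real \<times> real \<Rightarrow> complex" and R :: real
  assumes pdl_eq_0: "\<And>is y. set is \<subseteq> {1,2} \<Longrightarrow> R < norm y \<Longrightarrow> pdl is F y = 0"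
    and continuous_pdl: "\<And>is. set is \<subseteq> {1,2} \<Longrightarrow> continuous_on UNIV (pdl is F)"
    and has_vector_derivative_pdl_1: "\<And>is y. set is \<subseteq> {1,2} \<Longrightarrow>
      ((\<lambda>t. pdl is F (t, snd y)) has_vector_derivative pdl (1 # is) F y) (at (fst y))"
    and has_vector_derivative_pdl_2: "\<And>is y. set is \<subseteq> {1,2} \<Longrightarrow>
      ((\<lambda>t. pdl is F (fst y, t)) has_vector_derivative pdl (2 # is) F y) (at (snd y))"
begin

lemma bounded_pdl:
  assumes "set is \<subseteq> {1,2}"
  obtains M where "\<And>y. norm (pdl is F y) \<le> M"
proof -
  have "compact (pdl is F ` cball 0 R)"
    by (rule compact_continuous_image[OF continuous_on_subset[OF continuous_pdl[OF assms]]]) auto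
  then obtain M where "\<forall>v \<in> pdl is F ` cball 0 R. norm v \<le> M"
    by (auto dest!: compact_imp_bounded simp: bounded_iff)
  then have M: "\<And>y. y \<in> cball 0 R \<Longrightarrow> norm (pdl is F y) \<le> M" by blast
  have "norm (pdl is F y) \<le> max M 0" for y
    using M[of y] pdl_eq_0[OF assms, of y] by (cases "y \<in> cball 0 R") auto
  then show ?thesis by (rule that)
qed

end

lemma Cc_infty_smooth_compact_support:
  assumes S: "open S" and f: "f \<in> Cc_infty S"
  obtains R where "smooth_compact_support f R"
proof -
  from f obtain K where smooth: "smooth_on S f" and K: "compact K" "K \<subseteq> S"
    and f_eq_0: "\<And>y. y \<notin> K \<Longrightarrow> f y = 0"
    unfolding Cc_infty_def by blast
  obtain R where R: "\<And>y. y \<in> K \<Longrightarrow> norm y \<le> R"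
    using compact_imp_bounded[OF K(1)] by (auto simp: bounded_iff)
  have closed: "closed K" using K(1) by (rule compact_imp_closed)
  have outside: "pdl is f y = 0" if "y \<notin> K" for "is" y
    using closed f_eq_0 that by (rule pdl_eq_0_outside)
  show ?thesis
  proof (rule that, unfold_locales)
    fix "is" :: "nat list" and y :: "real \<times> real" assume "is": "set is \<subseteq> {1,2}"
    show "R < norm y \<Longrightarrow> pdl is f y = 0" using outside R[of y] by (cases "y \<in> K") auto
    have "((\<lambda>t. pdl is f (t, snd y)) has_vector_derivative pdl (1 # is) f y) (at (fst y)) \<and>
        ((\<lambda>t. pdl is f (fst y, t)) has_vector_derivative pdl (2 # is) f y) (at (snd y))"
    proof (cases "y \<in> K")
      case True
      then show ?thesis using smooth "is" K(2)
        by (auto simp: smooth_on_def pd_differentiable_def pd_def vector_derivative_works)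
    next
      case False
      have "pdl (1 # is) f y = 0" and "pdl (2 # is) f y = 0" using outside[OF False] by blast+
      then show ?thesis
        using has_vector_derivative_lines_eq_0[where g = "pdl is f", OF closed outside False] by simp
    qed
    then show "((\<lambda>t. pdl is f (t, snd y)) has_vector_derivative pdl (1 # is) f y) (at (fst y))"
      and "((\<lambda>t. pdl is f (fst y, t)) has_vector_derivative pdl (2 # is) f y) (at (snd y))" by auto
  next
    fix "is" :: "nat list" assume "is": "set is \<subseteq> {1,2}"
    have "isCont (pdl is f) y" for y
    proof (cases "y \<in> K")
      case True
      then show ?thesis using smooth "is" K(2) S by (auto simp: smooth_on_def continuous_on_eq_continuous_at)
    next
      case False
      have "continuous_on (- K) (pdl is f)"
        by (rule continuous_on_eq[OF continuous_on_const[of _ 0]]) (use outside in auto)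
      then show ?thesis using False closed by (simp add: continuous_on_eq_continuous_at open_Compl)
    qed
    then show "continuous_on UNIV (pdl is f)" by (simp add: continuous_at_imp_continuous_on)
  qed
qed

lemma Cc_infty_eq_0_outside: "f \<in> Cc_infty S \<Longrightarrow> y \<notin> S \<Longrightarrow> f y = 0"
  unfolding Cc_infty_def by blast

section \<open>Amplitudes and kernel integrals\<close>

lemma has_vector_derivative_shift:
  fixes g :: "real \<Rightarrow> 'a::real_normed_vector"
  assumes "(g has_vector_derivative D) (at (t0 - c))"
  shows "((\<lambda>t. g (t - c)) has_vector_derivative D) (at t0)"
proof -
  have "((\<lambda>t. t - c) has_vector_derivative 1) (at t0)"
    using has_vector_derivative_diff[OF has_vector_derivative_id has_vector_derivative_const] by simp
  from vector_diff_chain_at[OF this] assms show ?thesis by (simp add: o_def)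
qed

lemma has_vector_derivative_reflect_shift:
  fixes g :: "real \<Rightarrow> 'a::real_normed_vector"
  assumes "(g has_vector_derivative D) (at (- t0 - c))"
  shows "((\<lambda>t. g (- t - c)) has_vector_derivative - D) (at t0)"
proof -
  have "((\<lambda>t. - t - c) has_vector_derivative -1) (at t0)"
    using has_vector_derivative_diff[OF has_vector_derivative_minus[OF has_vector_derivative_id]
        has_vector_derivative_const] by simp
  from vector_diff_chain_at[OF this] assms show ?thesis by (simp add: o_def)
qed

lemma has_vector_derivative_cis_affine:
  "((\<lambda>t. cis (b * (A - B * t))) has_vector_derivative \<i> * complex_of_real (- b * B) * cis (b * (A - B * t0))) (at t0)"
proof -
  have "((\<lambda>w. exp (\<i> * (of_real b * (of_real A - of_real B * w)))) has_field_derivative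
      exp (\<i> * (of_real b * (of_real A - of_real B * of_real t0))) * (\<i> * (of_real b * (- of_real B)))) (at (of_real t0))"
    by (auto intro!: derivative_eq_intros)
  from has_vector_derivative_real_field[OF this]
  show ?thesis by (simp add: cis_conv_exp mult.commute mult.left_commute)
qed

lemma Pair_minus: "(a, c) - z = (a - fst z, c - snd z)"
  by (cases z) simp

lemma power_le_fact_mult_exp:
  assumes "0 \<le> (y::real)"
  shows "y ^ n \<le> fact n * exp y"
proof -
  have "(\<Sum>k\<in>{n}. y ^ k /\<^sub>R fact k) \<le> (\<Sum>k. y ^ k /\<^sub>R fact k)"
    by (rule sum_le_suminf) (use summable_exp_generic[of y] assms in auto)
  then have "y ^ n / fact n \<le> exp y" by (simp add: exp_def divide_inverse mult.commute)
  then show ?thesis by (simp add: field_simps)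
qed

lemma power_le_fact_div_mult_exp:
  assumes "0 \<le> (y::real)" and "c > 0"
  shows "y ^ n \<le> fact n / c ^ n * exp (c * y)"
proof -
  have "c ^ n * y ^ n \<le> fact n * exp (c * y)"
    using power_le_fact_mult_exp[of "c * y" n] assms by (simp add: power_mult_distrib)
  then show ?thesis using assms by (simp add: field_simps)
qed

definition green_kernel :: "real \<Rightarrow> real \<times> real \<Rightarrow> complex" where
  "green_kernel lam z = complex_of_real ((1 / (2 * pi)) * MacdonaldK0 (sqrt lam * norm z))"

lemma borel_measurable_green_kernel [measurable]: "green_kernel lam \<in> borel_measurable borel"
  unfolding green_kernel_def[abs_def] by measurable

lemma norm_green_kernel: "norm (green_kernel lam z) = (1 / (2 * pi)) * MacdonaldK0 (sqrt lam * norm z)"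
  unfolding green_kernel_def norm_of_real using MacdonaldK0_nonneg[of "sqrt lam * norm z"] by simp

lemma integrable_green_kernel_exp:
  assumes "lam > 0"
  shows "integrable lborel (\<lambda>z::real \<times> real. norm (green_kernel lam z) * exp (sqrt lam / 4 * norm z))"
  using integrable_mult_right[OF integrable_MacdonaldK0_exp[of "sqrt lam"], of "1 / (2 * pi)"] assms
  by (simp add: norm_green_kernel mult.assoc)

lemma norm_reflect_pt [simp]: "norm (reflect_pt x) = norm x"
  by (cases x) (simp add: reflect_pt_def norm_Pair)

lemma norm_minus_reflect_pt: "norm (x - reflect_pt y) = norm (reflect_pt x - y)"
  by (cases x, cases y) (simp add: reflect_pt_def norm_Pair power2_eq_square algebra_simps)

lemma Sb_kernel_eq_green_kernel:
  "Sb_kernel b lam x y = cis (b * phase x y) * (green_kernel lam (x - y) - green_kernel lam (reflect_pt x - y))"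
  by (simp add: Sb_kernel_def green_kernel_def norm_minus_reflect_pt algebra_simps)

lemma Sb_op_boundary: "Sb_op b lam f (x1, 0) = 0"
proof -
  have "norm ((x1, 0) - y) = norm ((x1, 0) - reflect_pt y)" for y
    by (cases y) (simp add: reflect_pt_def norm_Pair)
  then show ?thesis by (simp add: Sb_op_def Sb_kernel_def)
qed

locale Sb_setting = smooth_compact_support +
  fixes b lam :: real
  assumes lam_pos: "lam > 0"
begin

definition decay_rate :: real where "decay_rate = sqrt lam / 8"

lemma decay_rate_pos: "decay_rate > 0"
  using lam_pos by (simp add: decay_rate_def)

text \<open>The phases are \<open>b * phase x (x - z)\<close> and \<open>b * phase x (reflect_pt x - z)\<close>; the latter does not
  depend on \<open>x\<close>.\<close>

definition direct_amplitude :: "nat list \<Rightarrow> nat \<Rightarrow> real \<times> real \<Rightarrow> real \<times> real \<Rightarrow> complex" where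
  "direct_amplitude is n x z = of_real (fst z) ^ n * cis (b * (fst z * snd z / 2 - fst z * snd x)) * pdl is F (x - z)"

definition reflected_amplitude :: "nat list \<Rightarrow> real \<times> real \<Rightarrow> real \<times> real \<Rightarrow> complex" where
  "reflected_amplitude is x z = cis (b * (fst z * snd z / 2)) * pdl is F (reflect_pt x - z)"

inductive_set amplitudes :: "(real \<times> real \<Rightarrow> real \<times> real \<Rightarrow> complex) set" where
  direct: "set is \<subseteq> {1,2} \<Longrightarrow> direct_amplitude is n \<in> amplitudes"
| reflected: "set is \<subseteq> {1,2} \<Longrightarrow> reflected_amplitude is \<in> amplitudes"
| add: "H1 \<in> amplitudes \<Longrightarrow> H2 \<in> amplitudes \<Longrightarrow> (\<lambda>x z. H1 x z + H2 x z) \<in> amplitudes"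
| scale: "H \<in> amplitudes \<Longrightarrow> (\<lambda>x z. c * H x z) \<in> amplitudes"

lemma amplitude_continuous: "H \<in> amplitudes \<Longrightarrow> continuous_on UNIV (\<lambda>p. H (fst p) (snd p))"
proof (induction rule: amplitudes.induct)
  case (direct "is" n)
  have "continuous_on UNIV (\<lambda>p::(real \<times> real) \<times> (real \<times> real). fst p - snd p)"
    by (intro continuous_intros)
  from continuous_on_compose2[OF continuous_pdl[OF direct] this]
  show ?case unfolding direct_amplitude_def by (intro continuous_intros) auto
next
  case (reflected "is")
  have "continuous_on UNIV (\<lambda>p::(real \<times> real) \<times> (real \<times> real). reflect_pt (fst p) - snd p)"
    unfolding reflect_pt_def by (intro continuous_intros)
  from continuous_on_compose2[OF continuous_pdl[OF reflected] this]
  show ?case unfolding reflected_amplitude_def by (intro continuous_intros) auto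
qed (auto intro: continuous_intros)

lemma amplitude_isCont:
  assumes "H \<in> amplitudes"
  shows "isCont (\<lambda>x. H x z) x"
proof -
  have pair: "isCont (\<lambda>x. (x, z)) x" by (intro continuous_intros)
  have "isCont (\<lambda>p. H (fst p) (snd p)) (x, z)"
    using amplitude_continuous[OF assms] by (meson UNIV_I continuous_on_eq_continuous_at open_UNIV)
  from isCont_o2[OF pair this] show ?thesis by simp
qed

lemma borel_measurable_amplitude [measurable]:
  assumes "H \<in> amplitudes"
  shows "H x \<in> borel_measurable lborel"
proof -
  have "continuous_on UNIV (\<lambda>z. (\<lambda>p. H (fst p) (snd p)) (x, z))"
    by (rule continuous_on_compose2[OF amplitude_continuous[OF assms]]) (auto intro: continuous_intros)
  then show ?thesis by (auto intro: borel_measurable_continuous_onI)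
qed

lemma amplitude_eq_0: "H \<in> amplitudes \<Longrightarrow> norm z < norm x - R \<Longrightarrow> H x z = 0"
proof (induction rule: amplitudes.induct)
  case (direct "is" n)
  have "R < norm (x - z)" using norm_triangle_ineq2[of x z] direct(2) by linarith
  then show ?case using pdl_eq_0[OF direct(1)] by (simp add: direct_amplitude_def)
next
  case (reflected "is")
  have "R < norm (reflect_pt x - z)" using norm_triangle_ineq2[of "reflect_pt x" z] reflected(2) by simp
  then show ?case using pdl_eq_0[OF reflected(1)] by (simp add: reflected_amplitude_def)
qed auto

lemma direct_amplitude_bound:
  assumes "set is \<subseteq> {1,2}"
  obtains C where "C \<ge> 0" "\<And>x z. norm (direct_amplitude is n x z) \<le> C * exp (decay_rate * norm z)"
proof -
  obtain M where M: "\<And>y. norm (pdl is F y) \<le> M" using bounded_pdl[OF assms] by blast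
  have M_nonneg: "0 \<le> M" using M[of 0] norm_ge_zero order_trans by blast
  have "norm (direct_amplitude is n x z) \<le> (fact n / decay_rate ^ n * M) * exp (decay_rate * norm z)" for x z
  proof -
    have "\<bar>fst z\<bar> ^ n \<le> norm z ^ n"
      using norm_fst_le[of "fst z" "snd z"] by (intro power_mono) auto
    also have "\<dots> \<le> fact n / decay_rate ^ n * exp (decay_rate * norm z)"
      using decay_rate_pos by (intro power_le_fact_div_mult_exp) auto
    finally have "\<bar>fst z\<bar> ^ n * norm (pdl is F (x - z)) \<le> (fact n / decay_rate ^ n * exp (decay_rate * norm z)) * M"
      by (rule mult_mono[OF _ M]) (use M_nonneg decay_rate_pos in auto)
    then show ?thesis by (simp add: direct_amplitude_def norm_mult norm_power mult_ac)
  qed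
  then show ?thesis using M_nonneg decay_rate_pos by (intro that[of "fact n / decay_rate ^ n * M"]) auto
qed

lemma reflected_amplitude_bound:
  assumes "set is \<subseteq> {1,2}"
  obtains C where "C \<ge> 0" "\<And>x z. norm (reflected_amplitude is x z) \<le> C * exp (decay_rate * norm z)"
proof -
  obtain M where M: "\<And>y. norm (pdl is F y) \<le> M" using bounded_pdl[OF assms] by blast
  have M_nonneg: "0 \<le> M" using M[of 0] norm_ge_zero order_trans by blast
  have "norm (reflected_amplitude is x z) \<le> M * exp (decay_rate * norm z)" for x z
    using M[of "reflect_pt x - z"] mult_left_mono[of 1 "exp (decay_rate * norm z)" M] M_nonneg decay_rate_pos
    by (simp add: reflected_amplitude_def norm_mult)
  then show ?thesis using M_nonneg by (rule that[rotated])
qed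

lemma amplitude_bound:
  "H \<in> amplitudes \<Longrightarrow> \<exists>C\<ge>0. \<forall>x z. norm (H x z) \<le> C * exp (decay_rate * norm z)"
proof (induction rule: amplitudes.induct)
  case (direct "is" n)
  then show ?case by (metis direct_amplitude_bound)
next
  case (reflected "is")
  then show ?case by (metis reflected_amplitude_bound)
next
  case (add H1 H2)
  then obtain C1 C2 where "C1 \<ge> 0" "C2 \<ge> 0"
    and C1: "\<And>x z. norm (H1 x z) \<le> C1 * exp (decay_rate * norm z)"
    and C2: "\<And>x z. norm (H2 x z) \<le> C2 * exp (decay_rate * norm z)" by blast
  have "norm (H1 x z + H2 x z) \<le> (C1 + C2) * exp (decay_rate * norm z)" for x z
    using norm_triangle_ineq[of "H1 x z" "H2 x z"] C1[of x z] C2[of x z] by (simp add: distrib_right)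
  then show ?case using \<open>C1 \<ge> 0\<close> \<open>C2 \<ge> 0\<close> by (intro exI[of _ "C1 + C2"]) auto
next
  case (scale H c)
  then obtain C where "C \<ge> 0" and C: "\<And>x z. norm (H x z) \<le> C * exp (decay_rate * norm z)" by blast
  have "norm (c * H x z) \<le> (norm c * C) * exp (decay_rate * norm z)" for x z
    using mult_left_mono[OF C[of x z] norm_ge_zero[of c]] by (simp add: norm_mult mult.assoc)
  then show ?case using \<open>C \<ge> 0\<close> by (intro exI[of _ "norm c * C"]) auto
qed

lemma direct_amplitude_deriv_1:
  assumes "set is \<subseteq> {1,2}"
  shows "((\<lambda>t. direct_amplitude is n (t, snd x) z) has_vector_derivative direct_amplitude (1 # is) n x z)
    (at (fst x))"
proof -
  have "((\<lambda>s. pdl is F (s, snd x - snd z)) has_vector_derivative pdl (1 # is) F (x - z)) (at (fst x - fst z))"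
    using has_vector_derivative_pdl_1[OF assms, of "x - z"] by simp
  from has_vector_derivative_mult_right[OF has_vector_derivative_shift[OF this],
      of "of_real (fst z) ^ n * cis (b * (fst z * snd z / 2 - fst z * snd x))"]
  show ?thesis by (simp add: direct_amplitude_def Pair_minus mult.assoc)
qed

lemma direct_amplitude_deriv_2:
  assumes "set is \<subseteq> {1,2}"
  shows "((\<lambda>t. direct_amplitude is n (fst x, t) z) has_vector_derivative
    direct_amplitude (2 # is) n x z + (- \<i> * of_real b) * direct_amplitude is (Suc n) x z) (at (snd x))"
proof -
  define \<theta> where "\<theta> t = b * (fst z * snd z / 2 - fst z * t)" for t
  have "((\<lambda>s. pdl is F (fst x - fst z, s)) has_vector_derivative pdl (2 # is) F (x - z)) (at (snd x - snd z))"
    using has_vector_derivative_pdl_2[OF assms, of "x - z"] by simp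
  from has_vector_derivative_mult_right[OF has_vector_derivative_mult[OF
        has_vector_derivative_cis_affine[of b "fst z * snd z / 2" "fst z" "snd x"]
        has_vector_derivative_shift[OF this]], of "of_real (fst z) ^ n"]
  have "((\<lambda>t. of_real (fst z) ^ n * (cis (\<theta> t) * pdl is F (fst x - fst z, t - snd z)))
      has_vector_derivative of_real (fst z) ^ n * (cis (\<theta> (snd x)) * pdl (2 # is) F (x - z)
        + \<i> * complex_of_real (- b * fst z) * cis (\<theta> (snd x)) * pdl is F (x - z))) (at (snd x))"
    by (simp add: \<theta>_def Pair_minus[symmetric])
  then show ?thesis by (simp add: \<theta>_def direct_amplitude_def Pair_minus algebra_simps)
qed

lemma reflected_amplitude_deriv_1:
  assumes "set is \<subseteq> {1,2}"
  shows "((\<lambda>t. reflected_amplitude is (t, snd x) z) has_vector_derivative reflected_amplitude (1 # is) x z)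
    (at (fst x))"
proof -
  have "((\<lambda>s. pdl is F (s, - snd x - snd z)) has_vector_derivative pdl (1 # is) F (reflect_pt x - z))
      (at (fst x - fst z))"
    using has_vector_derivative_pdl_1[OF assms, of "reflect_pt x - z"] by (simp add: reflect_pt_def)
  from has_vector_derivative_mult_right[OF has_vector_derivative_shift[OF this], of "cis (b * (fst z * snd z / 2))"]
  show ?thesis by (simp add: reflected_amplitude_def Pair_minus reflect_pt_def)
qed

lemma reflected_amplitude_deriv_2:
  assumes "set is \<subseteq> {1,2}"
  shows "((\<lambda>t. reflected_amplitude is (fst x, t) z) has_vector_derivative -1 * reflected_amplitude (2 # is) x z)
    (at (snd x))"
proof -
  have "((\<lambda>s. pdl is F (fst x - fst z, s)) has_vector_derivative pdl (2 # is) F (reflect_pt x - z))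
      (at (- snd x - snd z))"
    using has_vector_derivative_pdl_2[OF assms, of "reflect_pt x - z"] by (simp add: reflect_pt_def)
  from has_vector_derivative_mult_right[OF has_vector_derivative_reflect_shift[OF this],
      of "cis (b * (fst z * snd z / 2))"]
  show ?thesis by (simp add: reflected_amplitude_def Pair_minus reflect_pt_def)
qed

lemma amplitude_deriv_1:
  "H \<in> amplitudes \<Longrightarrow>
    \<exists>H'\<in>amplitudes. \<forall>x z. ((\<lambda>t. H (t, snd x) z) has_vector_derivative H' x z) (at (fst x))"
proof (induction rule: amplitudes.induct)
  case (direct "is" n)
  then show ?case
    by (intro bexI[OF _ amplitudes.direct[of "1 # is" n]] allI direct_amplitude_deriv_1) auto
next
  case (reflected "is")
  then show ?case
    by (intro bexI[OF _ amplitudes.reflected[of "1 # is"]] allI reflected_amplitude_deriv_1) auto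
next
  case (add H1 H2)
  then obtain H1' H2' where "H1' \<in> amplitudes" "H2' \<in> amplitudes"
    and "\<And>x z. ((\<lambda>t. H1 (t, snd x) z) has_vector_derivative H1' x z) (at (fst x))"
    and "\<And>x z. ((\<lambda>t. H2 (t, snd x) z) has_vector_derivative H2' x z) (at (fst x))" by blast
  then show ?case by (intro bexI[OF _ amplitudes.add] allI has_vector_derivative_add)
next
  case (scale H c)
  then obtain H' where "H' \<in> amplitudes"
    and "\<And>x z. ((\<lambda>t. H (t, snd x) z) has_vector_derivative H' x z) (at (fst x))" by blast
  then show ?case by (intro bexI[OF _ amplitudes.scale[where c = c]] allI has_vector_derivative_mult_right)
qed

lemma amplitude_deriv_2:
  "H \<in> amplitudes \<Longrightarrow>
    \<exists>H'\<in>amplitudes. \<forall>x z. ((\<lambda>t. H (fst x, t) z) has_vector_derivative H' x z) (at (snd x))"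
proof (induction rule: amplitudes.induct)
  case (direct "is" n)
  then show ?case
    by (intro bexI[OF _ amplitudes.add[OF amplitudes.direct[of "2 # is" n]
          amplitudes.scale[where c = "- \<i> * of_real b", OF amplitudes.direct[of "is" "Suc n"]]]]
        allI direct_amplitude_deriv_2) auto
next
  case (reflected "is")
  then show ?case
    by (intro bexI[OF _ amplitudes.scale[where c = "-1", OF amplitudes.reflected[of "2 # is"]]] allI
        reflected_amplitude_deriv_2) auto
next
  case (add H1 H2)
  then obtain H1' H2' where "H1' \<in> amplitudes" "H2' \<in> amplitudes"
    and "\<And>x z. ((\<lambda>t. H1 (fst x, t) z) has_vector_derivative H1' x z) (at (snd x))"
    and "\<And>x z. ((\<lambda>t. H2 (fst x, t) z) has_vector_derivative H2' x z) (at (snd x))" by blast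
  then show ?case by (intro bexI[OF _ amplitudes.add] allI has_vector_derivative_add)
next
  case (scale H c)
  then obtain H' where "H' \<in> amplitudes"
    and "\<And>x z. ((\<lambda>t. H (fst x, t) z) has_vector_derivative H' x z) (at (snd x))" by blast
  then show ?case by (intro bexI[OF _ amplitudes.scale[where c = c]] allI has_vector_derivative_mult_right)
qed

definition kernel_integral :: "(real \<times> real \<Rightarrow> real \<times> real \<Rightarrow> complex) \<Rightarrow> real \<times> real \<Rightarrow> complex" where
  "kernel_integral H x = (\<integral>z. green_kernel lam z * H x z \<partial>lborel)"

lemma integrable_green_kernel_weight:
  "integrable lborel (\<lambda>z. C * (norm (green_kernel lam z) * exp (2 * decay_rate * norm z)))"
  using integrable_mult_right[OF integrable_green_kernel_exp[OF lam_pos], of C] by (simp add: decay_rate_def)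

lemma green_kernel_amplitude_bound:
  assumes "H \<in> amplitudes"
  obtains C where
    "\<And>x z. norm (green_kernel lam z * H x z) \<le> C * (norm (green_kernel lam z) * exp (2 * decay_rate * norm z))"
proof -
  obtain C where C: "C \<ge> 0" "\<And>x z. norm (H x z) \<le> C * exp (decay_rate * norm z)"
    using amplitude_bound[OF assms] by blast
  have "norm (green_kernel lam z * H x z) \<le> C * (norm (green_kernel lam z) * exp (2 * decay_rate * norm z))" for x z
  proof -
    have "norm (green_kernel lam z * H x z) \<le> norm (green_kernel lam z) * (C * exp (decay_rate * norm z))"
      unfolding norm_mult by (rule mult_left_mono[OF C(2)]) simp
    also have "\<dots> \<le> norm (green_kernel lam z) * (C * exp (2 * decay_rate * norm z))"
      using C(1) decay_rate_pos by (intro mult_left_mono) auto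
    finally show ?thesis by (simp add: mult_ac)
  qed
  then show ?thesis by (rule that)
qed

lemma integrable_green_kernel_amplitude:
  assumes "H \<in> amplitudes"
  shows "integrable lborel (\<lambda>z. green_kernel lam z * H x z)"
proof -
  obtain C where C: "\<And>x z. norm (green_kernel lam z * H x z)
      \<le> C * (norm (green_kernel lam z) * exp (2 * decay_rate * norm z))"
    using green_kernel_amplitude_bound[OF assms] by blast
  show ?thesis
  proof (rule Bochner_Integration.integrable_bound[OF integrable_green_kernel_weight[of C]])
    show "AE z in lborel. norm (green_kernel lam z * H x z)
        \<le> norm (C * (norm (green_kernel lam z) * exp (2 * decay_rate * norm z)))"
      by (intro AE_I2 order_trans[OF C]) simp
  qed (use assms in measurable)
qed

lemma continuous_kernel_integral:
  assumes "H \<in> amplitudes"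
  shows "continuous_on UNIV (kernel_integral H)"
proof -
  obtain C where C: "\<And>x z. norm (green_kernel lam z * H x z)
      \<le> C * (norm (green_kernel lam z) * exp (2 * decay_rate * norm z))"
    using green_kernel_amplitude_bound[OF assms] by blast
  have "isCont (kernel_integral H) x" for x
    unfolding kernel_integral_def
    by (rule isCont_integral_dominated[OF _ _ C integrable_green_kernel_weight])
       (use assms amplitude_isCont in \<open>auto intro: continuous_intros\<close>)
  then show ?thesis by (simp add: continuous_at_imp_continuous_on)
qed

lemma kernel_integral_has_vector_derivative:
  assumes H: "H \<in> amplitudes" and H': "H' \<in> amplitudes"
    and deriv: "\<And>t z. ((\<lambda>s. H (p s) z) has_vector_derivative H' (p t) z) (at t)"
  shows "((\<lambda>t. kernel_integral H (p t)) has_vector_derivative kernel_integral H' (p t0)) (at t0)"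
proof -
  obtain C where C: "\<And>x z. norm (green_kernel lam z * H' x z)
      \<le> C * (norm (green_kernel lam z) * exp (2 * decay_rate * norm z))"
    using green_kernel_amplitude_bound[OF H'] by blast
  show ?thesis
    unfolding kernel_integral_def
  proof (rule has_vector_derivative_integral_dominated[OF _ _ _ _ _ integrable_green_kernel_weight[of C]])
    show "((\<lambda>s. green_kernel lam z * H (p s) z) has_vector_derivative green_kernel lam z * H' (p t) z) (at t)" for t z
      by (rule has_vector_derivative_mult_right[OF deriv])
    show "integrable lborel (\<lambda>z. green_kernel lam z * H (p t) z)" for t
      by (rule integrable_green_kernel_amplitude[OF H])
  qed (use H H' C in auto)
qed

lemma pd_kernel_integral:
  assumes H: "H \<in> amplitudes" and i: "i \<in> {1,2}"
  obtains H' where "H' \<in> amplitudes" "pd i (kernel_integral H) = kernel_integral H'"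
    "\<And>x. pd_differentiable i (kernel_integral H) x"
proof -
  consider "i = 1" | "i = 2" using i by auto
  then show ?thesis
  proof cases
    case 1
    obtain H' where H': "H' \<in> amplitudes"
      and d: "\<And>x z. ((\<lambda>t. H (t, snd x) z) has_vector_derivative H' x z) (at (fst x))"
      using amplitude_deriv_1[OF H] by blast
    have "((\<lambda>t. kernel_integral H (t, snd x)) has_vector_derivative kernel_integral H' x) (at (fst x))" for x
    proof -
      have "((\<lambda>s. H (s, snd x) z) has_vector_derivative H' (t, snd x) z) (at t)" for t z
        using d[of "(t, snd x)" z] by simp
      from kernel_integral_has_vector_derivative[OF H H' this, of "fst x"] show ?thesis by simp
    qed
    with H' 1 show ?thesis
      by (intro that) (auto simp: pd_def pd_differentiable_def vector_derivative_at intro: differentiableI_vector)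
  next
    case 2
    obtain H' where H': "H' \<in> amplitudes"
      and d: "\<And>x z. ((\<lambda>t. H (fst x, t) z) has_vector_derivative H' x z) (at (snd x))"
      using amplitude_deriv_2[OF H] by blast
    have "((\<lambda>t. kernel_integral H (fst x, t)) has_vector_derivative kernel_integral H' x) (at (snd x))" for x
    proof -
      have "((\<lambda>s. H (fst x, s) z) has_vector_derivative H' (fst x, t) z) (at t)" for t z
        using d[of "(fst x, t)" z] by simp
      from kernel_integral_has_vector_derivative[OF H H' this, of "snd x"] show ?thesis by simp
    qed
    with H' 2 show ?thesis
      by (intro that) (auto simp: pd_def pd_differentiable_def vector_derivative_at intro: differentiableI_vector)
  qed
qed

lemma pdl_kernel_integral:
  "H \<in> amplitudes \<Longrightarrow> set is \<subseteq> {1,2} \<Longrightarrow> \<exists>H'\<in>amplitudes. pdl is (kernel_integral H) = kernel_integral H'"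
proof (induction "is")
  case (Cons i "is")
  then obtain H1 where H1: "H1 \<in> amplitudes" "pdl is (kernel_integral H) = kernel_integral H1" by auto
  obtain H' where "H' \<in> amplitudes" "pd i (kernel_integral H1) = kernel_integral H'"
    by (rule pd_kernel_integral[OF H1(1)]) (use Cons.prems in auto)
  with H1 show ?case by auto
qed auto

lemma green_kernel_amplitude_le_decay:
  assumes H: "H \<in> amplitudes" and C: "C \<ge> 0" "\<And>x z. norm (H x z) \<le> C * exp (decay_rate * norm z)"
  shows "norm (green_kernel lam z * H x z)
    \<le> C * exp (decay_rate * R) * exp (- decay_rate * norm x) * (norm (green_kernel lam z) * exp (2 * decay_rate * norm z))"
proof (cases "norm z < norm x - R")
  case True
  then show ?thesis using amplitude_eq_0[OF H True] C(1) by simp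
next
  case False
  \<comment> \<open>the kernel weight has a spare factor \<open>exp (decay_rate * norm z) \<ge> exp (decay_rate * (norm x - R))\<close>\<close>
  have "decay_rate * norm z \<le> decay_rate * R + - decay_rate * norm x + 2 * decay_rate * norm z"
    using False decay_rate_pos mult_left_mono[of "norm x - R" "norm z" decay_rate] by (simp add: algebra_simps)
  then have "exp (decay_rate * norm z)
      \<le> exp (decay_rate * R) * exp (- decay_rate * norm x) * exp (2 * decay_rate * norm z)"
    by (simp add: exp_add[symmetric])
  from order_trans[OF C(2) mult_left_mono[OF this C(1)]]
  have "norm (H x z) \<le> C * exp (decay_rate * R) * exp (- decay_rate * norm x) * exp (2 * decay_rate * norm z)"
    by (simp add: mult_ac)
  from mult_left_mono[OF this norm_ge_zero[of "green_kernel lam z"]]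
  show ?thesis by (simp add: norm_mult mult_ac)
qed

lemma kernel_integral_decay:
  assumes H: "H \<in> amplitudes"
  obtains C where "\<And>x. norm (kernel_integral H x) \<le> C * exp (- decay_rate * norm x)"
proof -
  obtain C where C: "C \<ge> 0" "\<And>x z. norm (H x z) \<le> C * exp (decay_rate * norm z)"
    using amplitude_bound[OF H] by blast
  define W where "W = (\<integral>z. norm (green_kernel lam z) * exp (2 * decay_rate * norm z) \<partial>lborel)"
  have "norm (kernel_integral H x) \<le> (C * exp (decay_rate * R) * W) * exp (- decay_rate * norm x)" for x
  proof -
    define c where "c = C * exp (decay_rate * R) * exp (- decay_rate * norm x)"
    have "norm (kernel_integral H x) \<le> (\<integral>z. norm (green_kernel lam z * H x z) \<partial>lborel)"
      unfolding kernel_integral_def by (rule integral_norm_bound)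
    also have "\<dots> \<le> (\<integral>z. c * (norm (green_kernel lam z) * exp (2 * decay_rate * norm z)) \<partial>lborel)"
      using integrable_green_kernel_amplitude[OF H] green_kernel_amplitude_le_decay[OF H C]
      by (intro integral_mono integrable_green_kernel_weight) (auto simp: c_def)
    also have "\<dots> = c * W" by (simp add: W_def)
    finally show ?thesis by (simp add: c_def mult_ac)
  qed
  then show ?thesis by (rule that)
qed

definition Sb_amplitude :: "real \<times> real \<Rightarrow> real \<times> real \<Rightarrow> complex" where
  "Sb_amplitude x z = direct_amplitude [] 0 x z - reflected_amplitude [] x z"

lemma Sb_amplitude_in_amplitudes: "Sb_amplitude \<in> amplitudes"
proof -
  have "(\<lambda>x z. direct_amplitude [] 0 x z + (-1) * reflected_amplitude [] x z) \<in> amplitudes"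
    by (rule amplitudes.add[OF amplitudes.direct amplitudes.scale[OF amplitudes.reflected]]) simp_all
  then show ?thesis by (simp add: Sb_amplitude_def[abs_def])
qed

lemma Sb_op_eq_kernel_integral:
  assumes F_outside: "\<And>y. y \<notin> upper_half \<Longrightarrow> F y = 0"
  shows "Sb_op b lam F x = kernel_integral Sb_amplitude x"
proof -
  have [measurable]: "F \<in> borel_measurable borel"
    using continuous_pdl[of "[]"] by (simp add: borel_measurable_continuous_onI)
  have [measurable]: "(\<lambda>y. cis (b * phase x y)) \<in> borel_measurable borel"
    unfolding phase_def by (intro borel_measurable_continuous_onI continuous_intros)
  define A where "A y = green_kernel lam (x - y) * (cis (b * phase x y) * F y)" for y
  define B where "B y = green_kernel lam (reflect_pt x - y) * (cis (b * phase x y) * F y)" for y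
  have A_measurable: "A \<in> borel_measurable borel" and B_measurable: "B \<in> borel_measurable borel"
    unfolding A_def B_def reflect_pt_def by measurable
  have phase_direct: "phase x (x - z) = fst z * snd z / 2 - fst z * snd x" for z
    by (simp add: phase_def algebra_simps)
  have phase_reflected: "phase x (reflect_pt x - z) = fst z * snd z / 2" for z
    by (simp add: phase_def reflect_pt_def algebra_simps)
  have "A (x - z) = green_kernel lam z * direct_amplitude [] 0 x z" for z
    by (simp add: A_def direct_amplitude_def phase_direct)
  then have "integrable lborel A"
    and "integral\<^sup>L lborel A = (\<integral>z. green_kernel lam z * direct_amplitude [] 0 x z \<partial>lborel)"
    using integrable_lborel_minus_left[OF A_measurable, of x] integral_lborel_minus_left[OF A_measurable, of x]
      integrable_green_kernel_amplitude[OF amplitudes.direct, of "[]" 0 x] by simp_all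
  moreover have "B (reflect_pt x - z) = green_kernel lam z * reflected_amplitude [] x z" for z
    by (simp add: B_def reflected_amplitude_def phase_reflected)
  then have "integrable lborel B"
    and "integral\<^sup>L lborel B = (\<integral>z. green_kernel lam z * reflected_amplitude [] x z \<partial>lborel)"
    using integrable_lborel_minus_left[OF B_measurable, of "reflect_pt x"]
      integral_lborel_minus_left[OF B_measurable, of "reflect_pt x"]
      integrable_green_kernel_amplitude[OF amplitudes.reflected, of "[]" x] by simp_all
  moreover have "Sb_op b lam F x = (\<integral>y. A y - B y \<partial>lborel)"
    unfolding Sb_op_def set_lebesgue_integral_def
    by (rule Bochner_Integration.integral_cong[OF refl])
       (auto simp: A_def B_def Sb_kernel_eq_green_kernel F_outside algebra_simps indicator_def)
  moreover have "kernel_integral Sb_amplitude x = (\<integral>z. green_kernel lam z * direct_amplitude [] 0 x z \<partial>lborel)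
      - (\<integral>z. green_kernel lam z * reflected_amplitude [] x z \<partial>lborel)"
    unfolding kernel_integral_def Sb_amplitude_def right_diff_distrib
    by (intro Bochner_Integration.integral_diff integrable_green_kernel_amplitude amplitudes.direct
        amplitudes.reflected) simp_all
  ultimately show ?thesis by simp
qed

lemma Sb_op_in_classM:
  assumes "\<And>y. y \<notin> upper_half \<Longrightarrow> F y = 0"
  shows "Sb_op b lam F \<in> classM"
proof (rule classM_I[OF decay_rate_pos])
  have "Sb_op b lam F = kernel_integral Sb_amplitude"
    using Sb_op_eq_kernel_integral[OF assms] by blast
  then have pdl_Sb_op: "\<exists>H\<in>amplitudes. pdl is (Sb_op b lam F) = kernel_integral H" if "set is \<subseteq> {1,2}" for "is"
    using pdl_kernel_integral[OF Sb_amplitude_in_amplitudes that] by simp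
  show "continuous_on UNIV (pdl is (Sb_op b lam F))" if "set is \<subseteq> {1,2}" for "is"
    using pdl_Sb_op[OF that] continuous_kernel_integral by auto
  show "pd_differentiable i (pdl is (Sb_op b lam F)) x"
    if "is": "set is \<subseteq> {1,2}" and i: "i \<in> {1,2}" for "is" i x
  proof -
    obtain H where "H \<in> amplitudes" and "pdl is (Sb_op b lam F) = kernel_integral H"
      using pdl_Sb_op[OF "is"] by blast
    then show ?thesis using pd_kernel_integral[OF _ i] by metis
  qed
  show "\<exists>C. \<forall>x. norm (pdl is (Sb_op b lam F) x) \<le> C * exp (- decay_rate * norm x)"
    if "set is \<subseteq> {1,2}" for "is"
    using pdl_Sb_op[OF that] kernel_integral_decay by metis
qed (rule Sb_op_boundary)

end

theorem lemmaB3: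
  fixes b lam :: real
  assumes "lam > 0"
  shows "\<forall>f\<in>Cc_infty upper_half. Sb_op b lam f \<in> classM"
proof
  fix f assume f: "f \<in> Cc_infty upper_half"
  then obtain R where "smooth_compact_support f R"
    using Cc_infty_smooth_compact_support[OF open_upper_half] by blast
  then interpret Sb_setting f R b lam
    using assms by (simp add: Sb_setting_def Sb_setting_axioms_def)
  show "Sb_op b lam f \<in> classM"
    using Sb_op_in_classM Cc_infty_eq_0_outside[OF f] by blast
qed

end
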